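(* Let $n,m\ge0$ be integers, $d_1,\ldots,d_m$ positive integers, and $g_\bullet=|n;d_1,\ldots,d_m|$. (1) If $n\ge1$, then $|n;d_1,\ldots,d_m,1|=|n-1;d_1,\ldots,d_m|$. (2) For a positive integer $s$, if $h_\bullet=|n;d_1,\ldots,d_m,s|$, then with $g_j=0$ for $j<0$ and $t=\min\{d\ge0: g_d\le g_{d-s}\}$, one has $h_d=g_d-g_{d-s}>0$ for $d<t$ and $h_d=0$ for $d\ge t$. (3) If $n\ge1$, then $g^{(1)}_\bullet=|n-1;d_1,\ldots,d_m|$ if and only if $g_d\le g_{d-1}$ for all $d\ge r_0(g_\bullet)$.
   Context: For $P=\sum_{i\ge0}p_iz^i\in\mathbb{Z}[[z]]$ let $t=\min\{d:p_d\le0\}$ and $|P|=\sum q_iz^i$ with $q_i=p_i$ for $i<t$ and $q_i=0$ for $i\ge t$. For integers $n,m\ge0$ and positive integers $d_1,\ldots,d_m$, the Fröberg sequence $|n;d_1,\ldots,d_m|$ is the sequence $(h_0,h_1,\ldots)$ with $\sum h_iz^i=\left|\prod_{j=1}^m(1-z^{d_j})/(1-z)^n\right|$. For a sequence $g_\bullet$ with $g_0=1$, $g^{(1)}_\bullet$ is defined by $g^{(1)}_0=1$ and $g^{(1)}_d=\max\{0,g_d-g_{d-1}\}$ for $d\ge1$, and $r_0(g_\bullet)=\min\{d\ge1:g_d\le g_{d-1}\}$ ($\infty$ if none). *)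

theory Defs
  imports "HOL-Computational_Algebra.Formal_Power_Series" "HOL-Library.Extended_Nat"
begin

text \<open>Truncation |P| of an integer power series given by its coefficient sequence p:
  keep p_i for i < t = min{d. p_d \<le> 0} (t = infinity if no such d), zero afterwards.
  i < t holds iff all p_j with j \<le> i are positive.\<close>
definition trunc_pos :: "(nat \<Rightarrow> int) \<Rightarrow> nat \<Rightarrow> int" where
  "trunc_pos p i = (if \<forall>j\<le>i. p j > 0 then p i else 0)"

definition inv_one_minus_X :: "int fps" where
  "inv_one_minus_X = Abs_fps (\<lambda>_. 1)"


definition froberg :: "nat \<Rightarrow> nat list \<Rightarrow> nat \<Rightarrow> int" where
  "froberg n ds = trunc_pos (fps_nth ((\<Prod>d\<leftarrow>ds. 1 - fps_X ^ d) * inv_one_minus_X ^ n))"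

definition diff1 :: "(nat \<Rightarrow> int) \<Rightarrow> nat \<Rightarrow> int" where
  "diff1 g d = (if d = 0 then 1 else max 0 (g d - g (d - 1)))"

definition r0 :: "(nat \<Rightarrow> int) \<Rightarrow> enat" where
  "r0 g = (if \<exists>d\<ge>1. g d \<le> g (d - 1) then enat (LEAST d. d \<ge> 1 \<and> g d \<le> g (d - 1)) else \<infinity>)"

definition shifted :: "(nat \<Rightarrow> int) \<Rightarrow> nat \<Rightarrow> nat \<Rightarrow> int" where
  "shifted g s d = (if d < s then 0 else g (d - s))"

end

theory Submission
  imports Defs
begin

text \<open>Multiplying a series by \<open>1 - z^s\<close> replaces its coefficients \<open>p\<close> by \<open>q_d = p_d - p_{d-s}\<close>.
  As long as \<open>q\<close> stays positive, so does \<open>p\<close> (each \<open>p_d\<close> exceeds an earlier, positive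
  coefficient), hence truncation does not interfere and \<open>|(1 - z^s) P|\<close> and \<open>|P|\<close> differ
  exactly by the shift; the first non-positive \<open>q_d\<close> is the first \<open>d\<close> with
  \<open>|P|_d \<le> |P|_{d-s}\<close>. Part (1) is the identity \<open>(1 - z) / (1 - z)^n = 1 / (1 - z)^(n-1)\<close>,
  and with it part (3) becomes part (2) for \<open>s = 1\<close>: the truncated first differences agree
  with \<open>g^(1)\<close> before \<open>r\<^sub>0\<close> and vanish from \<open>r\<^sub>0\<close> on, where \<open>g^(1)\<close> vanishes
  iff \<open>g\<close> does not increase.\<close>

lemma trunc_pos_nonneg: "0 \<le> trunc_pos p i"
  unfolding trunc_pos_def by auto

lemma trunc_pos_pos_iff: "0 < trunc_pos p i \<longleftrightarrow> (\<forall>j\<le>i. 0 < p j)"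
  unfolding trunc_pos_def by auto

lemma trunc_pos_eq: "\<forall>j\<le>i. 0 < p j \<Longrightarrow> trunc_pos p i = p i"
  unfolding trunc_pos_def by auto

lemma trunc_pos_eq_0: "\<exists>j\<le>i. p j \<le> 0 \<Longrightarrow> trunc_pos p i = 0"
  unfolding trunc_pos_def by auto

lemma shifted_nonneg: "(\<And>e. 0 \<le> g e) \<Longrightarrow> 0 \<le> shifted g s d"
  unfolding shifted_def by auto

lemma trunc_pos_minus_shifted:
  assumes "\<forall>e\<le>d. 0 < p e"
  shows "trunc_pos p d - shifted (trunc_pos p) s d = p d - shifted p s d"
  using assms by (simp add: shifted_def trunc_pos_eq)

lemma pos_if_minus_shifted_pos:
  assumes "\<forall>e\<le>d. 0 < p e - shifted p s e"
  shows "\<forall>e\<le>d. 0 < p e"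
proof (intro allI impI)
  have "0 < s"
    using assms[rule_format, of 0] by (cases s) (auto simp: shifted_def)
  fix e assume "e \<le> d"
  then show "0 < p e"
  proof (induction e rule: less_induct)
    case (less e)
    have "0 \<le> shifted p s e"
      using less.IH[of "e - s"] less.prems \<open>0 < s\<close> by (auto simp: shifted_def less_imp_le)
    with assms less.prems show ?case by fastforce
  qed
qed

lemma trunc_pos_gt_shifted_iff:
  "(\<forall>e\<le>d. shifted (trunc_pos p) s e < trunc_pos p e) \<longleftrightarrow> (\<forall>e\<le>d. 0 < p e - shifted p s e)"
proof -
  have "0 < p e" if "\<forall>e\<le>d. shifted (trunc_pos p) s e < trunc_pos p e" "e \<le> d" for e
  proof -
    have "0 \<le> shifted (trunc_pos p) s e" by (rule shifted_nonneg[OF trunc_pos_nonneg])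
    with that have "0 < trunc_pos p e" by fastforce
    then show ?thesis by (simp add: trunc_pos_pos_iff)
  qed
  with pos_if_minus_shifted_pos
  have pos: "\<forall>e\<le>d. 0 < p e" if "(\<forall>e\<le>d. shifted (trunc_pos p) s e < trunc_pos p e)
      \<or> (\<forall>e\<le>d. 0 < p e - shifted p s e)"
    using that by blast
  have "shifted (trunc_pos p) s e < trunc_pos p e \<longleftrightarrow> 0 < p e - shifted p s e"
    if "\<forall>e\<le>d. 0 < p e" "e \<le> d" for e
    using trunc_pos_minus_shifted[of e p s] that by fastforce
  with pos show ?thesis by blast
qed

lemma trunc_pos_minus_shifted_eq:
  "trunc_pos (\<lambda>e. p e - shifted p s e) d =
     (if \<forall>e\<le>d. shifted (trunc_pos p) s e < trunc_pos p e
      then trunc_pos p d - shifted (trunc_pos p) s d else 0)"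
proof (cases "\<forall>e\<le>d. 0 < p e - shifted p s e")
  case True
  then show ?thesis
    using pos_if_minus_shifted_pos trunc_pos_minus_shifted trunc_pos_gt_shifted_iff
    by (simp add: trunc_pos_eq)
next
  case False
  then show ?thesis
    using trunc_pos_gt_shifted_iff by (auto intro!: trunc_pos_eq_0 simp: not_less)
qed

lemma r0_le_enat_iff: "r0 g \<le> enat d \<longleftrightarrow> (\<exists>e. 1 \<le> e \<and> e \<le> d \<and> g e \<le> g (e - 1))"
proof
  assume "r0 g \<le> enat d"
  then have ex: "\<exists>e\<ge>1. g e \<le> g (e - 1)" and le: "(LEAST e. 1 \<le> e \<and> g e \<le> g (e - 1)) \<le> d"
    unfolding r0_def by (auto split: if_splits)
  from LeastI_ex[OF ex] le show "\<exists>e. 1 \<le> e \<and> e \<le> d \<and> g e \<le> g (e - 1)" by blast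
next
  assume "\<exists>e. 1 \<le> e \<and> e \<le> d \<and> g e \<le> g (e - 1)"
  then obtain e where "1 \<le> e" "e \<le> d" "g e \<le> g (e - 1)" by blast
  then have "(LEAST e. 1 \<le> e \<and> g e \<le> g (e - 1)) \<le> d"
    by (metis (mono_tags, lifting) Least_le order.trans)
  with \<open>1 \<le> e\<close> \<open>g e \<le> g (e - 1)\<close> show "r0 g \<le> enat d" unfolding r0_def by auto
qed

lemma gt_shifted_one_iff_not_r0_le:
  assumes "0 < g 0"
  shows "(\<forall>e\<le>d. shifted g 1 e < g e) \<longleftrightarrow> \<not> r0 g \<le> enat d"
proof -
  have shift_one: "shifted g 1 e < g e \<longleftrightarrow> (1 \<le> e \<longrightarrow> g (e - 1) < g e)" for e
    using assms by (cases e) (simp_all add: shifted_def)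
  show ?thesis
    unfolding r0_le_enat_iff
  proof (intro iffI notI allI impI)
    assume "\<forall>e\<le>d. shifted g 1 e < g e" and "\<exists>e. 1 \<le> e \<and> e \<le> d \<and> g e \<le> g (e - 1)"
    then show False using shift_one by fastforce
  next
    fix e assume "\<nexists>e. 1 \<le> e \<and> e \<le> d \<and> g e \<le> g (e - 1)" and "e \<le> d"
    then show "shifted g 1 e < g e" using shift_one by (meson not_le)
  qed
qed

lemma diff1_trunc_pos_eq_iff:
  assumes "p 0 = 1"
  shows "diff1 (trunc_pos p) = trunc_pos (\<lambda>d. p d - shifted p 1 d)
    \<longleftrightarrow> (\<forall>d. r0 (trunc_pos p) \<le> enat d \<longrightarrow> trunc_pos p d \<le> trunc_pos p (d - 1))"
proof -
  define g where "g = trunc_pos p"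
  have "g 0 = 1" using assms by (simp add: g_def trunc_pos_def)
  have first_diff: "trunc_pos (\<lambda>d. p d - shifted p 1 d) d = (if r0 g \<le> enat d then 0 else diff1 g d)"
    for d
    using trunc_pos_minus_shifted_eq[of p 1 d] gt_shifted_one_iff_not_r0_le[of g d] \<open>g 0 = 1\<close>
    by (auto simp: g_def[symmetric] diff1_def shifted_def)
  have pos_if_r0_le: "r0 g \<le> enat d \<Longrightarrow> 0 < d" for d
    using r0_le_enat_iff by fastforce
  have "diff1 g = trunc_pos (\<lambda>d. p d - shifted p 1 d) \<longleftrightarrow> (\<forall>d. r0 g \<le> enat d \<longrightarrow> diff1 g d = 0)"
    unfolding fun_eq_iff first_diff by auto
  also have "\<dots> \<longleftrightarrow> (\<forall>d. r0 g \<le> enat d \<longrightarrow> g d \<le> g (d - 1))"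
    using pos_if_r0_le by (auto simp: diff1_def)
  finally show ?thesis unfolding g_def .
qed

definition froberg_series :: "nat \<Rightarrow> nat list \<Rightarrow> int fps" where
  "froberg_series n ds = (\<Prod>d\<leftarrow>ds. 1 - fps_X ^ d) * inv_one_minus_X ^ n"

lemma froberg_eq_trunc_pos: "froberg n ds = trunc_pos (fps_nth (froberg_series n ds))"
  unfolding froberg_def froberg_series_def ..

lemma froberg_series_append: "froberg_series n (ds @ [s]) = (1 - fps_X ^ s) * froberg_series n ds"
  unfolding froberg_series_def by (simp add: algebra_simps)

lemma fps_nth_one_minus_X_power_mult:
  "fps_nth ((1 - fps_X ^ s) * F) d = fps_nth F d - shifted (fps_nth F) s d"
  by (simp add: algebra_simps shifted_def fps_X_power_mult_right_nth)

lemma one_minus_X_mult_inv_one_minus_X: "(1 - fps_X) * inv_one_minus_X = 1"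
  using fps_nth_one_minus_X_power_mult[of 1 inv_one_minus_X]
  by (intro fps_ext) (simp add: inv_one_minus_X_def shifted_def)

lemma froberg_series_append_one: "froberg_series (Suc n) (ds @ [1]) = froberg_series n ds"
proof -
  have "froberg_series (Suc n) (ds @ [1]) =
      (\<Prod>d\<leftarrow>ds. 1 - fps_X ^ d) * ((1 - fps_X) * inv_one_minus_X) * inv_one_minus_X ^ n"
    unfolding froberg_series_append froberg_series_def by (simp add: mult_ac)
  then show ?thesis
    unfolding one_minus_X_mult_inv_one_minus_X froberg_series_def by simp
qed

lemma fps_nth_froberg_series_0:
  assumes "\<forall>d\<in>set ds. 0 < d"
  shows "fps_nth (froberg_series n ds) 0 = 1"
proof -
  have "fps_nth (\<Prod>d\<leftarrow>ds. 1 - fps_X ^ d :: int fps) 0 = 1"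
    using assms by (induction ds) (simp_all add: fps_mult_nth_0)
  then show ?thesis
    by (simp add: froberg_series_def fps_mult_nth_0 fps_nth_power_0 inv_one_minus_X_def)
qed

theorem lemma4p3:
  fixes n :: nat and ds :: "nat list"
  assumes "\<forall>d\<in>set ds. 0 < d"
  shows "(n \<ge> 1 \<longrightarrow> froberg n (ds @ [1]) = froberg (n - 1) ds)
    \<and> (\<forall>s::nat. 0 < s \<longrightarrow>
         (\<forall>d. ((\<forall>e\<le>d. froberg n ds e > shifted (froberg n ds) s e) \<longrightarrow>
                 froberg n (ds @ [s]) d = froberg n ds d - shifted (froberg n ds) s d
               \<and> froberg n (ds @ [s]) d > 0)
            \<and> ((\<exists>e\<le>d. froberg n ds e \<le> shifted (froberg n ds) s e) \<longrightarrow>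
                 froberg n (ds @ [s]) d = 0)))
    \<and> (n \<ge> 1 \<longrightarrow>
         (diff1 (froberg n ds) = froberg (n - 1) ds \<longleftrightarrow>
          (\<forall>d. r0 (froberg n ds) \<le> enat d \<longrightarrow> froberg n ds d \<le> froberg n ds (d - 1))))"
proof -
  define p where "p = fps_nth (froberg_series n ds)"
  have p_0: "p 0 = 1"
    unfolding p_def using assms by (rule fps_nth_froberg_series_0)
  have froberg_n: "froberg n ds = trunc_pos p"
    unfolding p_def froberg_eq_trunc_pos ..
  have froberg_append: "froberg n (ds @ [s]) = trunc_pos (\<lambda>d. p d - shifted p s d)" for s
    unfolding p_def froberg_eq_trunc_pos froberg_series_append fps_nth_one_minus_X_power_mult ..
  have part1: "froberg n (ds @ [1]) = froberg (n - 1) ds" if "n \<ge> 1"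
    using that froberg_series_append_one[of "n - 1" ds] by (simp add: froberg_eq_trunc_pos)
  have part2: "froberg n (ds @ [s]) d =
      (if \<forall>e\<le>d. shifted (froberg n ds) s e < froberg n ds e
       then froberg n ds d - shifted (froberg n ds) s d else 0)" for s d
    unfolding froberg_n froberg_append by (rule trunc_pos_minus_shifted_eq)
  have part2_pos: "0 < froberg n (ds @ [s]) d"
    if "\<forall>e\<le>d. shifted (froberg n ds) s e < froberg n ds e" for s d
    using that unfolding froberg_n froberg_append trunc_pos_gt_shifted_iff trunc_pos_pos_iff .
  have part2_zero: "froberg n (ds @ [s]) d = 0"
    if "\<exists>e\<le>d. froberg n ds e \<le> shifted (froberg n ds) s e" for s d
    using that unfolding part2 by (auto simp: not_less)
  have part3: "diff1 (froberg n ds) = froberg (n - 1) ds \<longleftrightarrow>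
      (\<forall>d. r0 (froberg n ds) \<le> enat d \<longrightarrow> froberg n ds d \<le> froberg n ds (d - 1))" if "n \<ge> 1"
    unfolding part1[OF that, symmetric] froberg_n froberg_append
    using p_0 by (rule diff1_trunc_pos_eq_iff)
  show ?thesis
    using part1 part2_pos part2_zero part3 by (simp add: part2)
qed

end
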